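(* For every real $p\geq 0$ and every integer $n\geq 2$, $$\sum_{k=1}^{n-1}\frac{B_{2k}\bar B_{2n-2k}}{(2k)(2n-2k)}\,\frac{\Gamma(2k+p)\Gamma(2n-2k+p)}{\Gamma(2k)\Gamma(2n-2k)}=2\Gamma(p+1)\sum_{k=1}^{n}\frac{B_{2k}B_{2n-2k}}{(2k)!\,(2n-2k)!}\,\frac{1-2^{2k-1}}{2^{2n-1}}\,\frac{\Gamma(2k+p)\Gamma(2n+2p)}{\Gamma(2p+2k+1)}+\frac{B_{2n}\Gamma(2n+2p)}{(2n)!\,2^{2n-1}}\sum_{k=1}^{2n-1}\beta(p+k,p+1).$$
   Context: $B_n$ denotes the Bernoulli numbers, defined by $\frac{x}{e^x-1}=\sum_{n\ge 0}B_n\frac{x^n}{n!}$ (so $B_0=1$). $\bar B_n:=\frac{1-2^{n-1}}{2^{n-1}}B_n$. $\Gamma$ is the Gamma function and $\beta(a,b)=\frac{\Gamma(a)\Gamma(b)}{\Gamma(a+b)}$ is the Euler beta function. *)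

theory Defs
  imports "HOL-Analysis.Analysis" "HOL-Computational_Algebra.Formal_Power_Series"
begin

text \<open>Bernoulli numbers via the generating function x/(e^x-1) = sum B_n x^n/n!,
  realised as the formal power series inverse of (e^x-1)/x = sum x^n/(n+1)!.\<close>
definition bernoulli :: "nat \<Rightarrow> real" where
  "bernoulli n = fact n * fps_nth (inverse (Abs_fps (\<lambda>m. 1 / fact (Suc m) :: real))) n"

definition bernoulli_bar :: "nat \<Rightarrow> real" where
  "bernoulli_bar n = (1 - 2 powi (int n - 1)) / 2 powi (int n - 1) * bernoulli n"

end

theory Submission
  imports Defs
begin

text \<open>
  Let G(x) = (x/2) coth (x/2) and H(x) = (x/2) / sinh (x/2), whose Taylor coefficients are
  B_m/m! (for m \<noteq> 1) and bar B_m/m!. Both are rational in e^(x/2), and for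
  t + s = 1 this yields G(tx) H(sx) + G(sx) H(tx) = 2 G(x/2) (t H(sx) + s H(tx)).
  Comparing the coefficients of x^(2n) gives a polynomial identity in t and s = 1 - t.
  After the boundary terms are rewritten by t - t^(2n) = \<Sum>j=1..2n-1. t^j (1 - t),
  every monomial has the form t^i (1 - t)^j with i, j \<ge> 1. Integrating against
  t^(p-1) (1 - t)^(p-1) over (0,1) turns it into Beta (p + i) (p + j), even for p = 0, and
  Gamma (a) Gamma (b) = Beta a b Gamma (a + b) brings the result into the stated form.
\<close>

unbundle no vec_syntax
notation fps_nth (infixl \<open>$\<close> 75)

abbreviation fps_scale :: "'a::comm_ring_1 \<Rightarrow> 'a fps \<Rightarrow> 'a fps" where
  "fps_scale c f \<equiv> f oo (fps_const c * fps_X)"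

lemma fps_scale_mult: "fps_scale c (f * g) = fps_scale c f * fps_scale (c::'a::idom) g"
  by (simp add: fps_compose_mult_distrib)

lemma fps_scale_fps_X: "fps_scale c fps_X = fps_const c * fps_X"
  unfolding fps_compose_linear by (rule fps_ext) (simp add: fps_X_def)

lemma fps_nth_scale_mult_scale:
  "(fps_scale a f * fps_scale b g) $ m = (\<Sum>i=0..m. a^i * b^(m-i) * f $ i * g $ (m-i))"
  unfolding fps_mult_nth fps_nth_compose_linear by (simp add: mult_ac)

definition expm1_div_X_fps :: "real fps" where
  "expm1_div_X_fps = Abs_fps (\<lambda>m. 1 / fact (Suc m))"

lemma fps_nth_0_scale_expm1_div_X_fps [simp]: "fps_scale c expm1_div_X_fps $ 0 = 1"
  by (simp add: expm1_div_X_fps_def)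

lemma scale_expm1_div_X_fps_neq_0: "fps_scale c expm1_div_X_fps \<noteq> 0"
  by (metis fps_nth_0_scale_expm1_div_X_fps fps_zero_nth zero_neq_one)

lemma fps_X_mult_expm1_div_X_fps: "fps_X * expm1_div_X_fps = fps_exp 1 - 1"
  by (rule fps_ext) (simp add: expm1_div_X_fps_def fact_reduce)

lemma fps_X_mult_scale_expm1_div_X_fps:
  "fps_const c * fps_X * fps_scale c expm1_div_X_fps = fps_exp c - 1"
  using arg_cong[OF fps_X_mult_expm1_div_X_fps, of "fps_scale c"]
  by (simp add: fps_scale_mult fps_scale_fps_X fps_compose_sub_distrib)

definition bernoulli_fps :: "real fps" where
  "bernoulli_fps = inverse expm1_div_X_fps"

lemma fps_nth_bernoulli_fps: "bernoulli_fps $ m = bernoulli m / fact m"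
  by (simp add: bernoulli_def bernoulli_fps_def expm1_div_X_fps_def)

lemma fps_nth_0_bernoulli_fps: "bernoulli_fps $ 0 = 1"
  by (simp add: bernoulli_fps_def expm1_div_X_fps_def)

lemma expm1_div_X_fps_mult_bernoulli_fps: "expm1_div_X_fps * bernoulli_fps = 1"
  unfolding bernoulli_fps_def by (rule inverse_mult_eq_1') (simp add: expm1_div_X_fps_def)

lemma scale_expm1_div_X_fps_mult_bernoulli_fps:
  "fps_scale c expm1_div_X_fps * fps_scale c bernoulli_fps = 1"
  by (metis expm1_div_X_fps_mult_bernoulli_fps fps_compose_1 fps_scale_mult)

text \<open>(x/2) coth (x/2) = x/(e^x - 1) + x/2\<close>

definition xcoth_fps :: "real fps" where
  "xcoth_fps = bernoulli_fps + fps_const (1/2) * fps_X"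

lemma xcoth_fps_mult_expm1_div_X_fps:
  "fps_const 2 * xcoth_fps * expm1_div_X_fps = fps_exp 1 + 1"
proof -
  have "fps_const 2 * xcoth_fps * expm1_div_X_fps
          = fps_const 2 * (expm1_div_X_fps * bernoulli_fps) + fps_X * expm1_div_X_fps"
    unfolding xcoth_fps_def by (simp add: algebra_simps flip: fps_const_mult)
  then show ?thesis
    by (simp add: expm1_div_X_fps_mult_bernoulli_fps fps_X_mult_expm1_div_X_fps)
qed

lemma scale_xcoth_fps_mult_scale_expm1_div_X_fps:
  "fps_const 2 * fps_scale c xcoth_fps * fps_scale c expm1_div_X_fps = fps_exp c + 1"
  using arg_cong[OF xcoth_fps_mult_expm1_div_X_fps, of "fps_scale c"]
  by (simp add: fps_scale_mult fps_compose_add_distrib)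

text \<open>(x/2) / sinh (x/2) = 2 B(x/2) - B(x), where B(x) = x/(e^x - 1)\<close>

definition xcsch_fps :: "real fps" where
  "xcsch_fps = fps_const 2 * fps_scale (1/2) bernoulli_fps - bernoulli_fps"

lemma expm1_div_X_fps_mult_xcsch_fps: "expm1_div_X_fps * xcsch_fps = fps_exp (1/2)"
proof -
  let ?D = expm1_div_X_fps and ?B = bernoulli_fps and ?E = "fps_exp (1/2) :: real fps"
  have "fps_exp 1 = ?E * ?E"
    by (simp flip: fps_exp_add_mult)
  moreover have "fps_const 2 * fps_const (1/2) = (1 :: real fps)"
    by (simp flip: fps_const_mult)
  ultimately have "fps_X * (?D * xcsch_fps) = fps_X * ?E"
    using fps_X_mult_expm1_div_X_fps fps_X_mult_scale_expm1_div_X_fps[of "1/2"]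
      expm1_div_X_fps_mult_bernoulli_fps scale_expm1_div_X_fps_mult_bernoulli_fps[of "1/2"]
    unfolding xcsch_fps_def by algebra
  then show ?thesis
    by simp
qed

lemma scale_expm1_div_X_fps_mult_scale_xcsch_fps:
  "fps_scale c expm1_div_X_fps * fps_scale c xcsch_fps = fps_exp (c/2)"
  using arg_cong[OF expm1_div_X_fps_mult_xcsch_fps, of "fps_scale c"]
  by (simp add: fps_scale_mult)

lemma scale_xcoth_fps_minus: "fps_scale (-1) xcoth_fps = xcoth_fps"
proof -
  let ?D = expm1_div_X_fps and ?G = xcoth_fps
  have "fps_exp (-1) * fps_exp 1 = (1 :: real fps)"
    by (simp flip: fps_exp_add_mult)
  moreover have "fps_const (-1) = (-1 :: real fps)"
    by simp
  ultimately have "fps_const 2 * fps_X * ?D * fps_scale (-1) ?G = fps_const 2 * fps_X * ?D * ?G"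
    using scale_xcoth_fps_mult_scale_expm1_div_X_fps[of "-1"] xcoth_fps_mult_expm1_div_X_fps
      fps_X_mult_scale_expm1_div_X_fps[of "-1"] fps_X_mult_expm1_div_X_fps
    by algebra
  moreover have "fps_const 2 * fps_X * ?D \<noteq> 0"
    using scale_expm1_div_X_fps_neq_0[of 1] by simp
  ultimately show ?thesis
    by simp
qed

lemma fps_nth_xcoth_fps_odd: "odd m \<Longrightarrow> xcoth_fps $ m = 0"
  using arg_cong[OF scale_xcoth_fps_minus, of "\<lambda>f. f $ m"] by simp

lemma bernoulli_bar_eq: "bernoulli_bar m = (2 / 2^m - 1) * bernoulli m"
proof -
  have "(2::real) powi (int m - 1) = 2^m / 2"
    by (simp add: power_int_diff)
  then show ?thesis
    unfolding bernoulli_bar_def by (simp add: field_simps)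
qed

lemma fps_nth_xcsch_fps_eq: "xcsch_fps $ m = (2 / 2^m - 1) * bernoulli_fps $ m"
  unfolding xcsch_fps_def fps_sub_nth fps_mult_left_const_nth fps_nth_compose_linear
  by (simp add: power_divide algebra_simps)

lemma fps_nth_xcsch_fps: "xcsch_fps $ m = bernoulli_bar m / fact m"
  unfolding fps_nth_xcsch_fps_eq fps_nth_bernoulli_fps bernoulli_bar_eq by simp

lemma xcoth_xcsch_scaled_identity:
  fixes t s :: real
  assumes "t + s = 1"
  shows "fps_scale t xcoth_fps * fps_scale s xcsch_fps + fps_scale s xcoth_fps * fps_scale t xcsch_fps
       = fps_const 2 * fps_scale (1/2) xcoth_fps
           * (fps_const t * fps_scale s xcsch_fps + fps_const s * fps_scale t xcsch_fps)"
proof -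
  let ?D = "\<lambda>c. fps_scale c expm1_div_X_fps"
  define u where "u = fps_exp (t/2)"
  define v where "v = fps_exp (s/2)"
  have "fps_exp t = u * u" "fps_exp s = v * v" "fps_exp (1/2) = u * v"
    unfolding u_def v_def using assms
    by (simp_all flip: fps_exp_add_mult add: add_divide_distrib [symmetric])
  moreover have "fps_const 2 * fps_const (1/2) = (1 :: real fps)"
    by (simp flip: fps_const_mult)
  \<comment> \<open>after clearing the denominators both sides are polynomials in u and v\<close>
  ultimately have "fps_const 2 * fps_X * ?D t * ?D s * ?D (1/2)
      * (fps_scale t xcoth_fps * fps_scale s xcsch_fps + fps_scale s xcoth_fps * fps_scale t xcsch_fps)
    = fps_const 2 * fps_X * ?D t * ?D s * ?D (1/2)
      * (fps_const 2 * fps_scale (1/2) xcoth_fps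
           * (fps_const t * fps_scale s xcsch_fps + fps_const s * fps_scale t xcsch_fps))"
    using scale_xcoth_fps_mult_scale_expm1_div_X_fps[of t]
      scale_xcoth_fps_mult_scale_expm1_div_X_fps[of s]
      scale_xcoth_fps_mult_scale_expm1_div_X_fps[of "1/2"]
      scale_expm1_div_X_fps_mult_scale_xcsch_fps[of t] scale_expm1_div_X_fps_mult_scale_xcsch_fps[of s]
      fps_X_mult_scale_expm1_div_X_fps[of t] fps_X_mult_scale_expm1_div_X_fps[of s]
      fps_X_mult_scale_expm1_div_X_fps[of "1/2"]
    unfolding u_def v_def by algebra
  moreover have "fps_const 2 * fps_X * ?D t * ?D s * ?D (1/2) \<noteq> 0"
    using scale_expm1_div_X_fps_neq_0 by simp
  ultimately show ?thesis
    by simp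
qed

lemma xcoth_xcsch_coeff_identity:
  fixes t s :: real
  assumes "t + s = 1"
  shows "(\<Sum>i=0..m. xcoth_fps $ i * xcsch_fps $ (m-i) * (t^i * s^(m-i) + s^i * t^(m-i)))
       = 2 * (\<Sum>i=0..m. xcoth_fps $ i * xcsch_fps $ (m-i) / 2^i * (t * s^(m-i) + s * t^(m-i)))"
proof -
  let ?G = xcoth_fps and ?H = xcsch_fps
  have "(fps_scale t ?G * fps_scale s ?H + fps_scale s ?G * fps_scale t ?H) $ m
      = (\<Sum>i=0..m. ?G $ i * ?H $ (m-i) * (t^i * s^(m-i) + s^i * t^(m-i)))"
    unfolding fps_add_nth fps_nth_scale_mult_scale by (simp add: algebra_simps flip: sum.distrib)
  moreover have "(fps_const 2 * fps_scale (1/2) ?G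
           * (fps_const t * fps_scale s ?H + fps_const s * fps_scale t ?H)) $ m
      = 2 * (t * (fps_scale (1/2) ?G * fps_scale s ?H) $ m
             + s * (fps_scale (1/2) ?G * fps_scale t ?H) $ m)"
    by (simp only: distrib_left mult.assoc mult.left_commute[of _ "fps_const t"]
        mult.left_commute[of _ "fps_const s"] fps_add_nth fps_mult_left_const_nth)
  moreover have "\<dots> = 2 * (\<Sum>i=0..m. ?G $ i * ?H $ (m-i) / 2^i * (t * s^(m-i) + s * t^(m-i)))"
    unfolding fps_nth_scale_mult_scale
    by (simp add: sum_distrib_left power_divide algebra_simps add_divide_distrib flip: sum.distrib)
  ultimately show ?thesis
    using xcoth_xcsch_scaled_identity[OF assms] by metis
qed

lemma sum_atLeast0_atMost_double_even:
  fixes f :: "nat \<Rightarrow> 'a::comm_monoid_add"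
  assumes "\<And>i. odd i \<Longrightarrow> f i = 0"
  shows "(\<Sum>i=0..2*n. f i) = (\<Sum>k=0..n. f (2*k))"
proof (induction n)
  case (Suc n)
  have "2 * Suc n = Suc (Suc (2*n))"
    by simp
  then show ?case
    using Suc assms[of "Suc (2*n)"] by (simp add: sum.atLeast0_atMost_Suc)
qed simp

lemma bernoulli_xcsch_even_identity:
  fixes t s :: real
  assumes "t + s = 1"
  shows "(\<Sum>k=0..n. bernoulli_fps $ (2*k) * xcsch_fps $ (2*n-2*k)
              * (t^(2*k) * s^(2*n-2*k) + s^(2*k) * t^(2*n-2*k)))
       = 2 * (\<Sum>k=0..n. xcsch_fps $ (2*k) * bernoulli_fps $ (2*n-2*k) / 2^(2*n-2*k)
              * (t * s^(2*k) + s * t^(2*k)))"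
proof -
  have even: "xcoth_fps $ (2*k) = bernoulli_fps $ (2*k)" for k
    by (simp add: xcoth_fps_def)
  have odd: "xcoth_fps $ i = 0" if "odd i" for i
    using that by (rule fps_nth_xcoth_fps_odd)
  have "(\<Sum>k=0..n. bernoulli_fps $ (2*k) * xcsch_fps $ (2*n-2*k)
              * (t^(2*k) * s^(2*n-2*k) + s^(2*k) * t^(2*n-2*k)))
      = 2 * (\<Sum>k=0..n. bernoulli_fps $ (2*k) * xcsch_fps $ (2*n-2*k) / 2^(2*k)
              * (t * s^(2*n-2*k) + s * t^(2*n-2*k)))"
    using xcoth_xcsch_coeff_identity[OF assms, of "2*n"]
    by (simp add: sum_atLeast0_atMost_double_even odd even)
  also have "(\<Sum>k=0..n. bernoulli_fps $ (2*k) * xcsch_fps $ (2*n-2*k) / 2^(2*k)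
              * (t * s^(2*n-2*k) + s * t^(2*n-2*k)))
      = (\<Sum>k=0..n. xcsch_fps $ (2*k) * bernoulli_fps $ (2*n-2*k) / 2^(2*n-2*k)
              * (t * s^(2*k) + s * t^(2*k)))"
    by (subst sum.atLeastAtMost_rev) (auto intro!: sum.cong simp: diff_mult_distrib2)
  finally show ?thesis .
qed

lemma sum_power_mult_one_minus: "(\<Sum>j=1..m. x^j * (1 - x)) = x - (x::'a::comm_ring_1)^Suc m"
  by (induction m) (simp_all add: algebra_simps)

lemma bernoulli_xcsch_poly_identity:
  fixes t s :: real
  assumes "t + s = 1" and "n \<ge> 1"
  shows "(\<Sum>k=1..n-1. bernoulli_fps $ (2*k) * xcsch_fps $ (2*n-2*k)
              * (t^(2*k) * s^(2*n-2*k) + s^(2*k) * t^(2*n-2*k)))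
       = 2 * (\<Sum>k=1..n. xcsch_fps $ (2*k) * bernoulli_fps $ (2*n-2*k) / 2^(2*n-2*k)
              * (t * s^(2*k) + s * t^(2*k)))
         + 2 * bernoulli_fps $ (2*n) / 2^(2*n) * (\<Sum>j=1..2*n-1. t^j * s + s^j * t)"
proof -
  let ?f = "\<lambda>k. bernoulli_fps $ (2*k) * xcsch_fps $ (2*n-2*k)
              * (t^(2*k) * s^(2*n-2*k) + s^(2*k) * t^(2*n-2*k))"
  let ?h = "\<lambda>k. xcsch_fps $ (2*k) * bernoulli_fps $ (2*n-2*k) / 2^(2*n-2*k)
              * (t * s^(2*k) + s * t^(2*k))"
  let ?b = "bernoulli_fps $ (2*n)"
  obtain m where m: "n = Suc m"
    using assms(2) by (cases n) auto
  have split_f: "(\<Sum>k=0..n. ?f k) = ?f 0 + (\<Sum>k=1..n-1. ?f k) + ?f n"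
    unfolding m by (simp add: sum.atLeast_Suc_atMost[of 0])
  have split_h: "(\<Sum>k=0..n. ?h k) = ?h 0 + (\<Sum>k=1..n. ?h k)"
    by (simp add: sum.atLeast_Suc_atMost[of 0])
  have geometric: "(\<Sum>j=1..2*n-1. t^j * s + s^j * t) = 1 - t^(2*n) - s^(2*n)"
  proof -
    have s: "s = 1 - t"
      using assms(1) by simp
    show ?thesis
      using sum_power_mult_one_minus[of t "2*n-1"] sum_power_mult_one_minus[of "1 - t" "2*n-1"]
        assms(2)
      unfolding s by (simp add: sum.distrib)
  qed
  have f_ends: "?f 0 + ?f n = 2 / 2^(2*n) * ?b * (t^(2*n) + s^(2*n))"
    by (simp add: fps_nth_0_bernoulli_fps fps_nth_xcsch_fps_eq algebra_simps)
  have h_0: "?h 0 = ?b / 2^(2*n)"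
    using assms(1) by (simp add: fps_nth_0_bernoulli_fps fps_nth_xcsch_fps_eq)
  have ends: "2 * ?h 0 - (?f 0 + ?f n) = 2 * ?b / 2^(2*n) * (\<Sum>j=1..2*n-1. t^j * s + s^j * t)"
    unfolding f_ends h_0 geometric by (simp add: field_simps)
  have "(\<Sum>k=1..n-1. ?f k) = (\<Sum>k=0..n. ?f k) - (?f 0 + ?f n)"
    unfolding split_f by simp
  also have "\<dots> = 2 * (\<Sum>k=0..n. ?h k) - (?f 0 + ?f n)"
    unfolding bernoulli_xcsch_even_identity[OF assms(1)] ..
  also have "\<dots> = 2 * (\<Sum>k=1..n. ?h k) + (2 * ?h 0 - (?f 0 + ?f n))"
    unfolding split_h by simp
  finally show ?thesis
    unfolding ends .
qed

lemma has_integral_Beta_monomial: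
  fixes a b :: real
  assumes "a + real i > 0" and "b + real j > 0"
  shows "((\<lambda>t. t^i * (1-t)^j * (t powr (a-1) * (1-t) powr (b-1)))
           has_integral Beta (a + real i) (b + real j)) {0<..<1}"
proof -
  have "((\<lambda>t. t powr (a + real i - 1) * (1-t) powr (b + real j - 1))
           has_integral Beta (a + real i) (b + real j)) {0<..<1}"
    using has_integral_Beta_real[OF assms] by (simp add: has_integral_Icc_iff_Ioo)
  moreover have "t powr (a + real i - 1) * (1-t) powr (b + real j - 1)
      = t^i * (1-t)^j * (t powr (a-1) * (1-t) powr (b-1))" if "t \<in> {0<..<1}" for t
  proof -
    have exponents: "a + real i - 1 = (a - 1) + real i" "b + real j - 1 = (b - 1) + real j"
      by simp_all
    show ?thesis
      unfolding exponents powr_add using that by (simp add: powr_realpow mult_ac)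
  qed
  ultimately show ?thesis
    by (rule has_integral_eq[rotated])
qed

lemma has_integral_Beta_symmetric:
  fixes p :: real
  assumes "p > -1" and "i \<ge> 1" and "j \<ge> 1"
  shows "((\<lambda>t. (t^i * (1-t)^j + (1-t)^i * t^j) * (t powr (p-1) * (1-t) powr (p-1)))
           has_integral 2 * Beta (p + real i) (p + real j)) {0<..<1}"
proof -
  have "((\<lambda>t. t^i * (1-t)^j * (t powr (p-1) * (1-t) powr (p-1))
              + t^j * (1-t)^i * (t powr (p-1) * (1-t) powr (p-1)))
           has_integral Beta (p + real i) (p + real j) + Beta (p + real j) (p + real i)) {0<..<1}"
    using assms by (intro has_integral_add has_integral_Beta_monomial) auto
  then show ?thesis
    by (simp add: Beta_commute[of "p + real j"] algebra_simps)
qed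

lemma Beta_bernoulli_xcsch_identity:
  fixes p :: real
  assumes "p > -1" and "n \<ge> 1"
  shows "(\<Sum>k=1..n-1. bernoulli_fps $ (2*k) * xcsch_fps $ (2*n-2*k)
              * Beta (p + real (2*k)) (p + real (2*n-2*k)))
       = 2 * (\<Sum>k=1..n. xcsch_fps $ (2*k) * bernoulli_fps $ (2*n-2*k) / 2^(2*n-2*k)
              * Beta (p + 1) (p + real (2*k)))
         + 2 * bernoulli_fps $ (2*n) / 2^(2*n) * (\<Sum>j=1..2*n-1. Beta (p + real j) (p + 1))"
proof -
  define w where "w t = t powr (p-1) * (1-t) powr (p-1)" for t :: real
  let ?P = "\<lambda>i j t. (t^i * (1-t)^j + (1-t)^i * t^j) * w t"
  let ?c = "\<lambda>k. bernoulli_fps $ (2*k) * xcsch_fps $ (2*n-2*k)"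
  let ?d = "\<lambda>k. xcsch_fps $ (2*k) * bernoulli_fps $ (2*n-2*k) / 2^(2*n-2*k)"
  let ?e = "2 * bernoulli_fps $ (2*n) / 2^(2*n)"
  have P: "(?P i j has_integral 2 * Beta (p + real i) (p + real j)) {0<..<1}"
    if "i \<ge> 1" "j \<ge> 1" for i j
    unfolding w_def using has_integral_Beta_symmetric[OF assms(1) that] .
  have lhs: "((\<lambda>t. \<Sum>k=1..n-1. ?c k * ?P (2*k) (2*n-2*k) t) has_integral
      (\<Sum>k=1..n-1. ?c k * (2 * Beta (p + real (2*k)) (p + real (2*n-2*k))))) {0<..<1}"
    by (intro has_integral_sum has_integral_mult_right P) auto
  have rhs: "((\<lambda>t. 2 * (\<Sum>k=1..n. ?d k * ?P 1 (2*k) t) + ?e * (\<Sum>j=1..2*n-1. ?P j 1 t))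
      has_integral
      2 * (\<Sum>k=1..n. ?d k * (2 * Beta (p + real 1) (p + real (2*k))))
        + ?e * (\<Sum>j=1..2*n-1. 2 * Beta (p + real j) (p + real 1))) {0<..<1}"
    by (intro has_integral_add has_integral_mult_right has_integral_sum P) auto
  have pointwise: "(\<lambda>t. \<Sum>k=1..n-1. ?c k * ?P (2*k) (2*n-2*k) t)
      = (\<lambda>t. 2 * (\<Sum>k=1..n. ?d k * ?P 1 (2*k) t) + ?e * (\<Sum>j=1..2*n-1. ?P j 1 t))"
  proof
    fix t :: real
    have "(\<Sum>k=1..n-1. ?c k * ?P (2*k) (2*n-2*k) t)
        = (\<Sum>k=1..n-1. ?c k * (t^(2*k) * (1-t)^(2*n-2*k) + (1-t)^(2*k) * t^(2*n-2*k))) * w t"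
      by (simp add: sum_distrib_right mult.assoc)
    also have "\<dots> = (2 * (\<Sum>k=1..n. ?d k * (t * (1-t)^(2*k) + (1-t) * t^(2*k)))
        + ?e * (\<Sum>j=1..2*n-1. t^j * (1-t) + (1-t)^j * t)) * w t"
      by (subst bernoulli_xcsch_poly_identity) (use assms(2) in simp_all)
    also have "\<dots> = 2 * (\<Sum>k=1..n. ?d k * ?P 1 (2*k) t) + ?e * (\<Sum>j=1..2*n-1. ?P j 1 t)"
      by (simp add: sum_distrib_right distrib_right mult.assoc)
    finally show "(\<Sum>k=1..n-1. ?c k * ?P (2*k) (2*n-2*k) t)
        = 2 * (\<Sum>k=1..n. ?d k * ?P 1 (2*k) t) + ?e * (\<Sum>j=1..2*n-1. ?P j 1 t)" .
  qed
  have factor_2: "(\<Sum>k\<in>A. f k * (2 * g k)) = 2 * (\<Sum>k\<in>A. f k * g k)"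
    for f g :: "nat \<Rightarrow> real" and A
    by (simp add: sum_distrib_left mult_ac)
  show ?thesis
    using has_integral_unique[OF lhs rhs[folded pointwise]]
    unfolding factor_2 sum_distrib_left[symmetric] by simp
qed

lemma of_nat_mult_Gamma_eq_fact: "k \<ge> 1 \<Longrightarrow> real k * Gamma (real k) = fact k"
  using Gamma_fact[of "k - 1", where 'a = real] by (simp add: of_nat_diff fact_reduce)

lemma bernoulli_bar_Gamma_term_eq_Beta:
  fixes p :: real
  assumes "i \<ge> 1" and "j \<ge> 1" and "i + j = m" and "p > -1"
  shows "bernoulli i * bernoulli_bar j / (real i * real j)
           * (Gamma (real i + p) * Gamma (real j + p) / (Gamma (real i) * Gamma (real j)))
         = Gamma (real m + 2*p) * (bernoulli_fps $ i * xcsch_fps $ j * Beta (p + real i) (p + real j))"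
proof -
  have "real i + p + (real j + p) = real m + 2*p"
    using assms(3) by (simp flip: of_nat_add)
  moreover have "real m + 2*p \<notin> \<int>\<^sub>\<le>\<^sub>0"
    using assms by (auto dest: nonpos_Ints_nonpos)
  ultimately have "Gamma (real i + p) * Gamma (real j + p)
      = Gamma (real m + 2*p) * Beta (p + real i) (p + real j)"
    using Gamma_Gamma_Beta[of "real i + p" "real j + p"] by (simp add: add.commute mult.commute)
  moreover have "Gamma (real i) > 0" "Gamma (real j) > 0"
    using assms by simp_all
  ultimately show ?thesis
    using assms(1,2)
    by (simp add: fps_nth_bernoulli_fps fps_nth_xcsch_fps field_simps flip: of_nat_mult_Gamma_eq_fact)
qed

lemma bernoulli_Gamma_term_eq_Beta_one:
  fixes p :: real
  assumes "1 \<le> i" and "i \<le> m"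
  shows "Gamma (p + 1) * (bernoulli i * bernoulli j / (fact i * fact j) * ((1 - 2^(i-1)) / 2^(m-1))
           * (Gamma (real i + p) * Gamma (real m + 2*p) / Gamma (2*p + real i + 1)))
         = Gamma (real m + 2*p)
             * (xcsch_fps $ i * bernoulli_fps $ j / 2^(m-i) * Beta (p + 1) (p + real i))"
proof -
  have "Beta (p + 1) (p + real i) = Gamma (p + 1) * Gamma (real i + p) / Gamma (2*p + real i + 1)"
    unfolding Beta_def by (simp add: add_ac)
  moreover have "(2::real)^(m-1) = 2^(m-i) * 2^(i-1)" "(2::real)^i = 2 * 2^(i-1)"
    using assms by (simp_all flip: power_add power_Suc)
  ultimately show ?thesis
    by (simp add: fps_nth_bernoulli_fps fps_nth_xcsch_fps_eq field_simps)
qed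

theorem theorem4p3:
  fixes p :: real and n :: nat
  assumes "p \<ge> 0" and "n \<ge> 2"
  shows "(\<Sum>k=1..n-1. bernoulli (2*k) * bernoulli_bar (2*n-2*k) / (real (2*k) * real (2*n-2*k))
            * (Gamma (real (2*k) + p) * Gamma (real (2*n-2*k) + p) / (Gamma (real (2*k)) * Gamma (real (2*n-2*k)))))
       = 2 * Gamma (p + 1) * (\<Sum>k=1..n. bernoulli (2*k) * bernoulli (2*n-2*k) / (fact (2*k) * fact (2*n-2*k))
            * ((1 - 2 ^ (2*k-1)) / 2 ^ (2*n-1))
            * (Gamma (real (2*k) + p) * Gamma (real (2*n) + 2*p) / Gamma (2*p + real (2*k) + 1)))
         + bernoulli (2*n) * Gamma (real (2*n) + 2*p) / (fact (2*n) * 2 ^ (2*n-1))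
            * (\<Sum>k=1..2*n-1. Beta (p + real k) (p + 1))"
proof -
  have p: "p > -1" and n: "n \<ge> 1"
    using assms by auto
  let ?\<Gamma> = "Gamma (real (2*n) + 2*p)"
  have lhs: "(\<Sum>k=1..n-1. bernoulli (2*k) * bernoulli_bar (2*n-2*k) / (real (2*k) * real (2*n-2*k))
            * (Gamma (real (2*k) + p) * Gamma (real (2*n-2*k) + p) / (Gamma (real (2*k)) * Gamma (real (2*n-2*k)))))
      = ?\<Gamma> * (\<Sum>k=1..n-1. bernoulli_fps $ (2*k) * xcsch_fps $ (2*n-2*k)
                  * Beta (p + real (2*k)) (p + real (2*n-2*k)))"
    unfolding sum_distrib_left using p by (intro sum.cong refl bernoulli_bar_Gamma_term_eq_Beta) auto
  have rhs: "Gamma (p + 1) * (\<Sum>k=1..n. bernoulli (2*k) * bernoulli (2*n-2*k) / (fact (2*k) * fact (2*n-2*k))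
            * ((1 - 2 ^ (2*k-1)) / 2 ^ (2*n-1))
            * (Gamma (real (2*k) + p) * ?\<Gamma> / Gamma (2*p + real (2*k) + 1)))
      = ?\<Gamma> * (\<Sum>k=1..n. xcsch_fps $ (2*k) * bernoulli_fps $ (2*n-2*k) / 2^(2*n-2*k)
                  * Beta (p + 1) (p + real (2*k)))"
    unfolding sum_distrib_left by (intro sum.cong refl bernoulli_Gamma_term_eq_Beta_one) auto
  have "(2::real)^(2*n) = 2 * 2^(2*n-1)"
    using n by (simp flip: power_Suc)
  then have "bernoulli (2*n) * ?\<Gamma> / (fact (2*n) * 2 ^ (2*n-1))
      = ?\<Gamma> * (2 * bernoulli_fps $ (2*n) / 2^(2*n))"
    by (simp add: fps_nth_bernoulli_fps)
  then show ?thesis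
    unfolding mult.assoc[of 2 "Gamma (p + 1)"] lhs rhs Beta_bernoulli_xcsch_identity[OF p n]
    by (simp add: algebra_simps)
qed

end
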